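(* There is an absolute constant $C > 0$ such that for every $L \geq 1$, $m \geq 1$, $k^* \in [m]$ and every ordered pair $(\tau, \tilde\tau)$ of states in $[m]^{L+1}$, the number of triples $(\lambda, i, k) \in [m]^{L+1}\times\{0,\ldots,L\}\times[m]$ such that $(\tau,\tilde\tau)$ occurs as a pair of consecutive states of the path $\gamma_{\lambda,\lambda_{[i,k]}}$ is at most $C m^2 (L+1)^{1 + \log_2 3}$.
   Context: States are $\lambda = (\lambda_0,\ldots,\lambda_L) \in [m]^{L+1}$; coordinate $\ell$ is level $\ell$. $\lambda_{[i,k]}$ is $\lambda$ with the level-$i$ entry replaced by $k$. The procedure $\mathbf{Swap}(a,b)$ ($0\le a\le b\le L$): if $b - a \leq 1$, perform the single elementary operation exchanging the entries at levels $a$ and $b$; otherwise with $h = \lfloor (a+b)/2 \rfloor$ perform $\mathbf{Swap}(a,h)$, then $\mathbf{Swap}(h,b)$, then $\mathbf{Swap}(a,h)$. The path $\gamma_{\lambda,\lambda_{[i,k]}}$ (with $k^*$ a fixed element of $[m]$) starts at $\lambda$ and performs in order: (1) set the level-0 entry to $k^*$; (2) $\mathbf{Swap}(0,i)$; (3) set the level-0 entry to $k$; (4) $\mathbf{Swap}(0,i)$; (5) set the level-0 entry to $\lambda_0$. The path is the sequence of states consisting of $\lambda$ followed by the state after each elementary operation; a pair of consecutive states is (state before, state after) one elementary operation. *)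

theory Defs
  imports Complex_Main
begin

text \<open>States in [m]^(L+1) are lists of length L+1 with entries in {1..m};
  list index l is level l.\<close>

definition states :: "nat \<Rightarrow> nat \<Rightarrow> nat list set" where
  "states L m = {xs. length xs = Suc L \<and> set xs \<subseteq> {1..m}}"

datatype elop = SetZero nat | Exch nat nat

fun apply_op :: "elop \<Rightarrow> nat list \<Rightarrow> nat list" where
  "apply_op (SetZero v) xs = xs[0 := v]"
| "apply_op (Exch a b) xs = xs[a := xs ! b, b := xs ! a]"

function swap_ops :: "nat \<Rightarrow> nat \<Rightarrow> elop list" where
  "swap_ops a b =
     (if b - a \<le> 1 then [Exch a b]
      else (let h = (a + b) div 2 in swap_ops a h @ swap_ops h b @ swap_ops a h))"
  by pat_completeness auto
termination by (relation "measure (\<lambda>(a, b). b - a)") auto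

definition path_ops :: "nat \<Rightarrow> nat list \<Rightarrow> nat \<Rightarrow> nat \<Rightarrow> elop list" where
  "path_ops kstar lam i k =
     [SetZero kstar] @ swap_ops 0 i @ [SetZero k] @ swap_ops 0 i @ [SetZero (lam ! 0)]"

fun run_ops :: "elop list \<Rightarrow> nat list \<Rightarrow> nat list list" where
  "run_ops [] xs = [xs]"
| "run_ops (o1 # os) xs = xs # run_ops os (apply_op o1 xs)"

definition gamma_path :: "nat \<Rightarrow> nat list \<Rightarrow> nat \<Rightarrow> nat \<Rightarrow> nat list list" where
  "gamma_path kstar lam i k = run_ops (path_ops kstar lam i k) lam"

definition consec_pairs :: "'a list \<Rightarrow> ('a \<times> 'a) set" where
  "consec_pairs p = set (zip p (tl p))"

end

theory Submission
  imports Defs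
begin

text \<open>
  Fix the level i and the position j of \<tau> on the
  path. Up to position j the path applies to \<lambda> at most two operations overwriting the level-0
  entry, interleaved with exchanges. Exchanges are injective and an overwrite forgets a single
  entry, so each overwrite multiplies the size of the fibres of the state at position j by at
  most m. Before the overwrite by k that state does not depend on k, which gives m * m pairs
  (\<lambda>, k); after it, k can be read off \<tau>, which gives 1 * m^2 pairs. As Swap on an interval of
  length 2^K performs 3^K exchanges, for 2^K \<le> L + 1 < 2^(K+1) each path has at most 9 * 3^K
  consecutive pairs, and summing over the L + 1 levels gives
  9 m^2 (L + 1) 3^K \<le> 9 m^2 (L + 1)^(1 + log 2 3).
\<close>

lemma card_fibre_comp_le:
  assumes "finite B" and "f ` A \<subseteq> B"
    and "\<And>y. card {x \<in> A. f x = y} \<le> a" and "card {y \<in> B. g y = z} \<le> b"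
  shows "card {x \<in> A. g (f x) = z} \<le> a * b"
proof -
  have "{x \<in> A. g (f x) = z} = (\<Union>y \<in> {y \<in> B. g y = z}. {x \<in> A. f x = y})"
    using assms(2) by auto
  then have "card {x \<in> A. g (f x) = z} \<le> (\<Sum>y \<in> {y \<in> B. g y = z}. card {x \<in> A. f x = y})"
    using card_UN_le[of "{y \<in> B. g y = z}"] assms(1) by simp
  also have "\<dots> \<le> card {y \<in> B. g y = z} * a"
    using sum_bounded_above[of "{y \<in> B. g y = z}" "\<lambda>y. card {x \<in> A. f x = y}" a] assms(3)
    by simp
  also have "\<dots> \<le> a * b"
    using assms(4) by (simp add: mult.commute)
  finally show ?thesis .
qed

declare swap_ops.simps [simp del]

lemma length_apply_op [simp]: "length (apply_op op xs) = length xs"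
  by (cases op) auto

lemma length_fold_apply_op [simp]: "length (fold apply_op ops xs) = length xs"
  by (induction ops arbitrary: xs) auto

lemma swap_ops_Exch:
  "op \<in> set (swap_ops a b) \<Longrightarrow> \<exists>x y. op = Exch x y \<and> x \<le> max a b \<and> y \<le> max a b"
proof (induction a b rule: swap_ops.induct)
  case (1 a b)
  show ?case
  proof (cases "b - a \<le> 1")
    case True
    then show ?thesis using "1.prems" by (auto simp: swap_ops.simps[of a b])
  next
    case False
    define h where "h = (a + b) div 2"
    have "op \<in> set (swap_ops a h) \<or> op \<in> set (swap_ops h b)"
      using "1.prems" False by (auto simp: swap_ops.simps[of a b] h_def Let_def)
    moreover have "max a h \<le> max a b" "max h b \<le> max a b"
      using False by (auto simp: h_def)
    ultimately show ?thesis
      using "1.IH"(1,2)[OF False h_def] by (meson order.trans)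
  qed
qed

lemma length_swap_ops_le: "b - a \<le> 2 ^ k \<Longrightarrow> length (swap_ops a b) \<le> 3 ^ k"
proof (induction a b arbitrary: k rule: swap_ops.induct)
  case (1 a b)
  show ?case
  proof (cases "b - a \<le> 1")
    case True
    then show ?thesis by (simp add: swap_ops.simps[of a b])
  next
    case False
    then obtain k' where k: "k = Suc k'"
      using "1.prems" by (cases k) auto
    define h where "h = (a + b) div 2"
    have "h - a \<le> 2 ^ k'" "b - h \<le> 2 ^ k'"
      using "1.prems" unfolding k h_def by auto
    then have "length (swap_ops a h) \<le> 3 ^ k'" "length (swap_ops h b) \<le> 3 ^ k'"
      using "1.IH"(1,2)[OF False h_def] by auto
    then show ?thesis
      using False by (simp add: swap_ops.simps[of a b] h_def[symmetric] Let_def k)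
  qed
qed

fun admissible_op :: "nat \<Rightarrow> nat \<Rightarrow> elop \<Rightarrow> bool" where
  "admissible_op L m (SetZero v) \<longleftrightarrow> v \<in> {1..m}"
| "admissible_op L m (Exch x y) \<longleftrightarrow> x \<le> L \<and> y \<le> L"

fun is_reset :: "elop \<Rightarrow> bool" where
  "is_reset (SetZero v) = True"
| "is_reset (Exch x y) = False"

abbreviation resets :: "elop list \<Rightarrow> nat" where
  "resets ops \<equiv> length (filter is_reset ops)"

lemma finite_states: "finite (states L m)"
  using finite_lists_length_eq[of "{1..m}" "Suc L"] by (simp add: states_def conj_commute)

lemma apply_op_states:
  "admissible_op L m op \<Longrightarrow> xs \<in> states L m \<Longrightarrow> apply_op op xs \<in> states L m"
  by (cases op) (auto simp: states_def dest: set_update_subset_insert[THEN subsetD])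

lemma fold_apply_op_states:
  "\<forall>op \<in> set ops. admissible_op L m op \<Longrightarrow> xs \<in> states L m \<Longrightarrow> fold apply_op ops xs \<in> states L m"
  by (induction ops arbitrary: xs) (auto intro: apply_op_states)

lemma swap_ops_admissible:
  "max a b \<le> L \<Longrightarrow> op \<in> set (swap_ops a b) \<Longrightarrow> admissible_op L m op"
  using swap_ops_Exch by fastforce

lemma swap_ops_not_reset: "op \<in> set (swap_ops a b) \<Longrightarrow> \<not> is_reset op"
  using swap_ops_Exch by fastforce

lemma apply_op_Exch_involutive:
  "x < length xs \<Longrightarrow> y < length xs \<Longrightarrow> apply_op (Exch x y) (apply_op (Exch x y) xs) = xs"
  by (auto intro!: nth_equalityI simp: nth_list_update)

lemma card_fibre_apply_op_le:
  assumes "admissible_op L m op"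
  shows "card {xs \<in> states L m. apply_op op xs = ys} \<le> m ^ resets [op]"
proof (cases op)
  case (SetZero v)
  have "{xs \<in> states L m. xs[0 := v] = ys} \<subseteq> (\<lambda>u. ys[0 := u]) ` {1..m}"
  proof
    fix xs assume xs: "xs \<in> {xs \<in> states L m. xs[0 := v] = ys}"
    then have "xs ! 0 \<in> set xs" and "xs = ys[0 := xs ! 0]"
      by (auto simp: states_def)
    moreover have "set xs \<subseteq> {1..m}"
      using xs by (simp add: states_def)
    ultimately show "xs \<in> (\<lambda>u. ys[0 := u]) ` {1..m}" by blast
  qed
  then have "card {xs \<in> states L m. xs[0 := v] = ys} \<le> card ((\<lambda>u. ys[0 := u]) ` {1..m})"
    by (intro card_mono) auto
  also have "\<dots> \<le> m"
    using card_image_le[of "{1..m}" "\<lambda>u. ys[0 := u]"] by simp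
  finally show ?thesis using SetZero by simp
next
  case (Exch x y)
  have "xs = apply_op op ys" if "xs \<in> states L m" "apply_op op xs = ys" for xs
  proof -
    have "x < length xs" "y < length xs"
      using that(1) assms Exch by (auto simp: states_def)
    then show ?thesis
      using that(2) Exch apply_op_Exch_involutive by metis
  qed
  then have "card {xs \<in> states L m. apply_op op xs = ys} \<le> card {apply_op op ys}"
    by (intro card_mono) auto
  then show ?thesis using Exch by simp
qed

lemma card_fibre_fold_le:
  assumes "\<forall>op \<in> set ops. admissible_op L m op"
  shows "card {xs \<in> states L m. fold apply_op ops xs = ys} \<le> m ^ resets ops"
  using assms
proof (induction ops)
  case Nil
  have "card {xs \<in> states L m. fold apply_op [] xs = ys} \<le> card {ys}"
    by (intro card_mono) auto
  then show ?case by simp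
next
  case (Cons op ops)
  then have adm: "admissible_op L m op"
    and IH: "card {xs \<in> states L m. fold apply_op ops xs = ys} \<le> m ^ resets ops"
    by auto
  have "card {xs \<in> states L m. fold apply_op ops (apply_op op xs) = ys}
      \<le> m ^ resets [op] * m ^ resets ops"
    by (rule card_fibre_comp_le[OF finite_states _ card_fibre_apply_op_le[OF adm] IH])
      (auto intro: apply_op_states[OF adm])
  then show ?case by (cases op) simp_all
qed

lemma fold_exchanges_inj:
  assumes "\<forall>op \<in> set ops. admissible_op L m op \<and> \<not> is_reset op"
    and "xs \<in> states L m" "ys \<in> states L m"
    and "fold apply_op ops xs = fold apply_op ops ys"
  shows "xs = ys"
proof -
  let ?F = "{zs \<in> states L m. fold apply_op ops zs = fold apply_op ops ys}"
  have "card ?F \<le> 1"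
    using card_fibre_fold_le[of ops L m] assms(1) by (simp add: filter_False)
  moreover have "xs \<in> ?F" "ys \<in> ?F" "finite ?F"
    using assms(2-4) finite_states by auto
  ultimately show ?thesis
    using card_le_Suc0_iff_eq[THEN iffD1] by auto
qed

lemma consec_pairs_Cons_Cons: "consec_pairs (x # y # zs) = insert (x, y) (consec_pairs (y # zs))"
  by (simp add: consec_pairs_def)

lemma consec_pairs_run_ops:
  "(\<tau>, \<tau>') \<in> consec_pairs (run_ops ops xs) \<Longrightarrow> \<exists>j < length ops. fold apply_op (take j ops) xs = \<tau>"
proof (induction ops arbitrary: xs)
  case Nil
  then show ?case by (simp add: consec_pairs_def)
next
  case (Cons op ops)
  obtain rest where rest: "run_ops ops (apply_op op xs) = apply_op op xs # rest"
    by (cases ops) auto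
  from Cons.prems consider "\<tau> = xs" | "(\<tau>, \<tau>') \<in> consec_pairs (run_ops ops (apply_op op xs))"
    unfolding run_ops.simps rest consec_pairs_Cons_Cons by auto
  then show ?case
  proof cases
    case 1
    then show ?thesis by (intro exI[of _ 0]) auto
  next
    case 2
    then obtain j where "j < length ops" "fold apply_op (take j ops) (apply_op op xs) = \<tau>"
      using Cons.IH by blast
    then show ?thesis by (intro exI[of _ "Suc j"]) auto
  qed
qed

text \<open>
  The final operation of the path, restoring the level-0 entry of \<lambda>, is the only one that depends
  on \<lambda>; it never produces the first state of a consecutive pair.
\<close>

definition path_ops_butlast :: "nat \<Rightarrow> nat \<Rightarrow> nat \<Rightarrow> elop list" where
  "path_ops_butlast kstar i k = (SetZero kstar # swap_ops 0 i) @ (SetZero k # swap_ops 0 i)"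

lemma consec_pairs_gamma_path:
  assumes "(\<tau>, \<tau>') \<in> consec_pairs (gamma_path kstar lam i k)"
  shows "\<exists>j \<le> 2 * length (swap_ops 0 i) + 2. fold apply_op (take j (path_ops_butlast kstar i k)) lam = \<tau>"
proof -
  have "path_ops kstar lam i k = path_ops_butlast kstar i k @ [SetZero (lam ! 0)]"
    by (simp add: path_ops_def path_ops_butlast_def)
  then obtain j where "j \<le> length (path_ops_butlast kstar i k)"
    and "fold apply_op (take j (path_ops_butlast kstar i k)) lam = \<tau>"
    using consec_pairs_run_ops[OF assms[unfolded gamma_path_def]] by (auto simp: less_Suc_eq_le)
  then show ?thesis by (intro exI[of _ j] conjI) (simp_all add: path_ops_butlast_def)
qed

lemma card_state_at_before_reset_le:
  assumes "i \<le> L" and "kstar \<in> {1..m}" and "j \<le> length (swap_ops 0 i) + 1"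
  shows "card {(lam, k). lam \<in> states L m \<and> k \<in> {1..m} \<and>
                 fold apply_op (take j (path_ops_butlast kstar i k)) lam = \<tau>} \<le> m ^ 2"
    (is "card ?R \<le> _")
proof -
  define ops where "ops = take j (SetZero kstar # swap_ops 0 i)"
  let ?F = "{lam \<in> states L m. fold apply_op ops lam = \<tau>}"
  have "take j (path_ops_butlast kstar i k) = ops" for k
    using assms(3) unfolding path_ops_butlast_def ops_def by (subst take_append) simp
  then have "?R = ?F \<times> {1..m}"
    by auto
  then have "card ?R = card ?F * m"
    by (simp add: card_cartesian_product)
  also have "\<dots> \<le> m ^ 1 * m"
  proof (cases "m = 0")
    case False
    have "card ?F \<le> m ^ resets ops"
      using assms(1,2) swap_ops_admissible[of 0 i L _ m]
      by (intro card_fibre_fold_le) (auto simp: ops_def dest!: in_set_takeD)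
    also have "\<dots> \<le> m ^ 1"
      using False swap_ops_not_reset[of _ 0 i]
      by (intro power_increasing) (cases j, auto simp: ops_def filter_empty_conv dest!: in_set_takeD)
    finally show ?thesis by simp
  qed simp
  finally show ?thesis by (simp add: power2_eq_square)
qed

lemma card_state_at_after_reset_le:
  assumes "i \<le> L" and "kstar \<in> {1..m}" and "j = length (swap_ops 0 i) + 2 + t"
  shows "card {(lam, k). lam \<in> states L m \<and> k \<in> {1..m} \<and>
                 fold apply_op (take j (path_ops_butlast kstar i k)) lam = \<tau>} \<le> m ^ 2"
    (is "card ?R \<le> _")
proof (cases "?R = {}")
  case True
  then show ?thesis by (simp only: card.empty le0)
next
  case False
  define pre where "pre k = SetZero kstar # swap_ops 0 i @ [SetZero k]" for k
  define ops where "ops k = pre k @ take t (swap_ops 0 i)" for k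
  have take: "take j (path_ops_butlast kstar i k) = ops k" for k
    unfolding path_ops_butlast_def ops_def pre_def assms(3) by simp
  have swap_adm: "admissible_op L m op" if "op \<in> set (swap_ops 0 i)" for op
    using swap_ops_admissible[of 0 i L op m] that assms(1) by simp
  have pre_states: "fold apply_op (pre k) lam \<in> states L m"
    if "lam \<in> states L m" and "k \<in> {1..m}" for lam k
    using that assms(2) swap_adm by (intro fold_apply_op_states) (auto simp: pre_def)
  have same_k: "k = k'" if "(lam, k) \<in> ?R" and "(lam', k') \<in> ?R" for lam k lam' k'
  proof -
    have states: "lam \<in> states L m" "lam' \<in> states L m" "k \<in> {1..m}" "k' \<in> {1..m}"
      using that by auto
    have "fold apply_op (pre k) lam = fold apply_op (pre k') lam'"
    proof (rule fold_exchanges_inj)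
      show "\<forall>op \<in> set (take t (swap_ops 0 i)). admissible_op L m op \<and> \<not> is_reset op"
        using swap_adm swap_ops_not_reset by (auto dest!: in_set_takeD)
    qed (use that take pre_states states in \<open>auto simp: ops_def\<close>)
    moreover have "fold apply_op (pre k) lam ! 0 = k" "fold apply_op (pre k') lam' ! 0 = k'"
      using states by (simp_all add: pre_def states_def)
    ultimately show ?thesis by simp
  qed
  from False obtain lam0 k0 where k0: "(lam0, k0) \<in> ?R" by auto
  let ?F = "{lam \<in> states L m. fold apply_op (ops k0) lam = \<tau>}"
  have "?R \<subseteq> ?F \<times> {k0}"
    using same_k[OF _ k0] take by auto
  then have "card ?R \<le> card (?F \<times> {k0})"
    using finite_states by (intro card_mono) auto
  also have "\<dots> = card ?F"
    by (simp add: card_cartesian_product)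
  also have "\<dots> \<le> m ^ resets (ops k0)"
    using k0 assms(2) swap_adm by (intro card_fibre_fold_le) (auto simp: ops_def pre_def dest!: in_set_takeD)
  also have "resets (ops k0) = 2"
    using swap_ops_not_reset[of _ 0 i] by (auto simp: ops_def pre_def filter_empty_conv dest!: in_set_takeD)
  finally show ?thesis .
qed

lemma card_state_at_le:
  assumes "i \<le> L" and "kstar \<in> {1..m}"
  shows "card {(lam, k). lam \<in> states L m \<and> k \<in> {1..m} \<and>
                 fold apply_op (take j (path_ops_butlast kstar i k)) lam = \<tau>} \<le> m ^ 2"
proof (cases "j \<le> length (swap_ops 0 i) + 1")
  case True
  then show ?thesis using card_state_at_before_reset_le[OF assms] by blast
next
  case False
  then obtain t where "j = length (swap_ops 0 i) + 2 + t"
    using le_Suc_ex[of "length (swap_ops 0 i) + 2" j] by auto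
  then show ?thesis using card_state_at_after_reset_le[OF assms] by blast
qed

lemma card_consec_pair_triples_le:
  assumes "kstar \<in> {1..m}" and "L < 2 ^ Suc K"
  shows "card {(lam, i, k). lam \<in> states L m \<and> i \<in> {0..L} \<and> k \<in> {1..m} \<and>
                 (\<tau>, \<tau>') \<in> consec_pairs (gamma_path kstar lam i k)}
           \<le> 9 * 3 ^ K * (L + 1) * m ^ 2"
    (is "card ?T \<le> _")
proof -
  define N :: nat where "N = 2 * 3 ^ Suc K + 2"
  define R where "R i j = {(lam, k). lam \<in> states L m \<and> k \<in> {1..m} \<and>
                   fold apply_op (take j (path_ops_butlast kstar i k)) lam = \<tau>}" for i j
  define A where "A ij = (case ij of (i, j) \<Rightarrow> (\<lambda>(lam, k). (lam, i, k)) ` R i j)" for ij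
  have finite_R: "finite (R i j)" for i j
    using finite_states
    by (rule finite_subset[rotated, OF finite_cartesian_product[OF _ finite_atLeastAtMost]])
      (auto simp: R_def)
  have card_A: "card (A (i, j)) \<le> m ^ 2" if "i \<le> L" for i j
  proof -
    have "card (A (i, j)) \<le> card (R i j)"
      unfolding A_def using finite_R by (simp add: card_image_le)
    also have "\<dots> \<le> m ^ 2"
      unfolding R_def by (rule card_state_at_le[OF that assms(1)])
    finally show ?thesis .
  qed
  have "?T \<subseteq> (\<Union>ij \<in> {..L} \<times> {..N}. A ij)"
  proof
    fix z assume "z \<in> ?T"
    then obtain lam i k where z: "z = (lam, i, k)"
      and lam: "lam \<in> states L m" "i \<le> L" "k \<in> {1..m}"
      and "(\<tau>, \<tau>') \<in> consec_pairs (gamma_path kstar lam i k)"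
      by auto
    then obtain j where j: "j \<le> 2 * length (swap_ops 0 i) + 2"
      and "fold apply_op (take j (path_ops_butlast kstar i k)) lam = \<tau>"
      using consec_pairs_gamma_path by blast
    then have "z \<in> A (i, j)"
      using lam unfolding z A_def R_def by auto
    moreover have "length (swap_ops 0 i) \<le> 3 ^ Suc K"
      using lam(2) assms(2) by (intro length_swap_ops_le) simp
    ultimately show "z \<in> (\<Union>ij \<in> {..L} \<times> {..N}. A ij)"
      using j lam(2) unfolding N_def by force
  qed
  moreover have "finite (A ij)" for ij
    using finite_R by (simp add: A_def split: prod.split)
  ultimately have "card ?T \<le> card (\<Union>ij \<in> {..L} \<times> {..N}. A ij)"
    by (intro card_mono) auto
  also have "\<dots> \<le> (\<Sum>ij \<in> {..L} \<times> {..N}. card (A ij))"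
    by (rule card_UN_le) simp
  also have "\<dots> \<le> (L + 1) * (N + 1) * m ^ 2"
    using card_A sum_bounded_above[of "{..L} \<times> {..N}" "\<lambda>ij. card (A ij)" "m ^ 2"] by auto
  also have "\<dots> \<le> (L + 1) * (9 * 3 ^ K) * m ^ 2"
    by (intro mult_mono) (auto simp: N_def)
  also have "\<dots> = 9 * 3 ^ K * (L + 1) * m ^ 2"
    by (simp add: algebra_simps)
  finally show ?thesis .
qed

lemma pow_le_powr_log:
  fixes b c x :: real
  assumes "1 < b" and "1 \<le> c" and "b ^ K \<le> x"
  shows "c ^ K \<le> x powr log b c"
proof -
  have "c ^ K = (b powr log b c) powr K"
    using assms(1,2) by (simp add: powr_realpow)
  also have "\<dots> = (b ^ K) powr log b c"
    using assms(1) by (simp add: powr_powr powr_realpow[symmetric] mult.commute)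
  also have "\<dots> \<le> x powr log b c"
    using assms by (intro powr_mono2) auto
  finally show ?thesis .
qed

theorem lemma6:
  shows "\<exists>C::real. C > 0 \<and>
    (\<forall>L m kstar \<tau> \<tau>'. L \<ge> 1 \<longrightarrow> m \<ge> 1 \<longrightarrow> kstar \<in> {1..m} \<longrightarrow>
      \<tau> \<in> states L m \<longrightarrow> \<tau>' \<in> states L m \<longrightarrow>
      real (card {(lam, i, k). lam \<in> states L m \<and> i \<in> {0..L} \<and> k \<in> {1..m} \<and>
                   (\<tau>, \<tau>') \<in> consec_pairs (gamma_path kstar lam i k)})
        \<le> C * real m ^ 2 * real (L + 1) powr (1 + log 2 3))"
proof (intro exI[of _ 9] conjI allI impI)
  fix L m kstar :: nat and \<tau> \<tau>' :: "nat list"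
  assume kstar: "kstar \<in> {1..m}"
  obtain K where K: "2 ^ K \<le> L + 1" "L + 1 < 2 ^ Suc K"
    using ex_power_ivl1[of 2 "L + 1"] by auto
  let ?T = "{(lam, i, k). lam \<in> states L m \<and> i \<in> {0..L} \<and> k \<in> {1..m} \<and>
              (\<tau>, \<tau>') \<in> consec_pairs (gamma_path kstar lam i k)}"
  have "real (2 ^ K) \<le> real (L + 1)"
    using K(1) by (simp only: of_nat_le_iff)
  then have three_pow: "3 ^ K \<le> real (L + 1) powr log 2 3"
    by (intro pow_le_powr_log) auto
  have "real (card ?T) \<le> real (9 * 3 ^ K * (L + 1) * m ^ 2)"
    using card_consec_pair_triples_le[OF kstar, of L K] K(2) by (simp only: of_nat_le_iff)
  also have "\<dots> = 9 * 3 ^ K * real (L + 1) * real m ^ 2"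
    by (simp add: algebra_simps)
  also have "\<dots> \<le> 9 * real (L + 1) powr log 2 3 * real (L + 1) * real m ^ 2"
    using three_pow by (intro mult_right_mono) auto
  also have "\<dots> = 9 * real m ^ 2 * real (L + 1) powr (1 + log 2 3)"
    by (simp add: powr_add)
  finally show "real (card ?T) \<le> 9 * real m ^ 2 * real (L + 1) powr (1 + log 2 3)" .
qed simp

end
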